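(* Each of the graphs $K_4, H_1, H_2, H_3, H_4, H_5, H_6, H_7, H_8, H_9$ is $4$-$\chi_\rho$-vertex-critical.
   Context: All graphs are finite and simple; $d(u,v)$ is the shortest-path distance. A $k$-packing coloring of $G$ is a map $c:V(G)\to\{1,\dots,k\}$ such that whenever $u\neq v$ and $c(u)=c(v)=i$, we have $d(u,v)>i$. $\chi_\rho(G)$ is the least $k$ such that $G$ has a $k$-packing coloring. $G$ is $4$-$\chi_\rho$-vertex-critical if $\chi_\rho(G)=4$ and $\chi_\rho(G-x)<4$ for every vertex $x$. $H_1$: vertices $a,b,c,d,e$; edges $ab,ad,ae,bd,de,bc$. $H_2$: vertices $a,b,c,d,e$; edges $ab,be,ea,bc,cd,db$. $H_3$: vertices $a,\dots,f$; edges $ab,bc,ca,ad,be,cf$. $H_4$: vertices $a,\dots,g$; edges $ab,bc,cd,de,ef,cg,dg$. $H_5$: vertices $a,\dots,f$; edges $ab,bc,cd,da,be,cf$. $H_6$: vertices $a,\dots,f$; edges $ab,be,ed,da,ac,ce,bf$. $H_7$: vertices $a,\dots,j$; edges $ab,bc,cd,de,ef,eg,gh,hi,ij,jb$. $H_8$: $H_7$ together with the additional edge $ai$. $H_9$: vertices $a,\dots,h$; edges $ab,bc,cd,de,bf,cg,dh$. *)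

theory Defs
  imports Main "HOL-Library.Extended_Nat"
begin

type_synonym 'a graph = "'a set \<times> 'a set set"

definition verts :: "'a graph \<Rightarrow> 'a set" where "verts G = fst G"
definition edges :: "'a graph \<Rightarrow> 'a set set" where "edges G = snd G"

definition simple_graph :: "'a graph \<Rightarrow> bool" where
  "simple_graph G \<longleftrightarrow> finite (verts G) \<and>
     (\<forall>e\<in>edges G. e \<subseteq> verts G \<and> card e = 2)"

definition adj :: "'a graph \<Rightarrow> 'a \<Rightarrow> 'a \<Rightarrow> bool" where
  "adj G u v \<longleftrightarrow> {u, v} \<in> edges G"

definition walk :: "'a graph \<Rightarrow> 'a list \<Rightarrow> bool" where
  "walk G xs \<longleftrightarrow> xs \<noteq> [] \<and> set xs \<subseteq> verts G \<and>
     (\<forall>i. Suc i < length xs \<longrightarrow> adj G (xs ! i) (xs ! Suc i))"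

(* shortest-path distance; infinite if no path *)
definition dist :: "'a graph \<Rightarrow> 'a \<Rightarrow> 'a \<Rightarrow> enat" where
  "dist G u v = (INF xs \<in> {xs. walk G xs \<and> hd xs = u \<and> last xs = v}. enat (length xs - 1))"

definition packing_coloring :: "'a graph \<Rightarrow> nat \<Rightarrow> ('a \<Rightarrow> nat) \<Rightarrow> bool" where
  "packing_coloring G k c \<longleftrightarrow>
     (\<forall>v\<in>verts G. c v \<in> {1..k}) \<and>
     (\<forall>u\<in>verts G. \<forall>v\<in>verts G. u \<noteq> v \<and> c u = c v \<longrightarrow> dist G u v > enat (c u))"

definition packing_chromatic :: "'a graph \<Rightarrow> nat" where
  "packing_chromatic G = (LEAST k. \<exists>c. packing_coloring G k c)"

definition delete_vertex :: "'a graph \<Rightarrow> 'a \<Rightarrow> 'a graph" where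
  "delete_vertex G x = (verts G - {x}, {e \<in> edges G. x \<notin> e})"

definition vertex_critical4 :: "'a graph \<Rightarrow> bool" where
  "vertex_critical4 G \<longleftrightarrow> packing_chromatic G = 4 \<and>
     (\<forall>x\<in>verts G. packing_chromatic (delete_vertex G x) < 4)"

definition mk_graph :: "nat \<Rightarrow> (nat \<times> nat) list \<Rightarrow> nat graph" where
  "mk_graph n es = ({0..<n}, (\<lambda>(u, v). {u, v}) ` set es)"

(* vertex naming: a=0, b=1, c=2, d=3, e=4, f=5, g=6, h=7, i=8, j=9 *)
definition K4 :: "nat graph" where
  "K4 = mk_graph 4 [(0,1),(0,2),(0,3),(1,2),(1,3),(2,3)]"
definition H1 :: "nat graph" where
  "H1 = mk_graph 5 [(0,1),(0,3),(0,4),(1,3),(3,4),(1,2)]"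
definition H2 :: "nat graph" where
  "H2 = mk_graph 5 [(0,1),(1,4),(4,0),(1,2),(2,3),(3,1)]"
definition H3 :: "nat graph" where
  "H3 = mk_graph 6 [(0,1),(1,2),(2,0),(0,3),(1,4),(2,5)]"
definition H4 :: "nat graph" where
  "H4 = mk_graph 7 [(0,1),(1,2),(2,3),(3,4),(4,5),(2,6),(3,6)]"
definition H5 :: "nat graph" where
  "H5 = mk_graph 6 [(0,1),(1,2),(2,3),(3,0),(1,4),(2,5)]"
definition H6 :: "nat graph" where
  "H6 = mk_graph 6 [(0,1),(1,4),(4,3),(3,0),(0,2),(2,4),(1,5)]"
definition H7 :: "nat graph" where
  "H7 = mk_graph 10 [(0,1),(1,2),(2,3),(3,4),(4,5),(4,6),(6,7),(7,8),(8,9),(9,1)]"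
definition H8 :: "nat graph" where
  "H8 = mk_graph 10 [(0,1),(1,2),(2,3),(3,4),(4,5),(4,6),(6,7),(7,8),(8,9),(9,1),(0,8)]"
definition H9 :: "nat graph" where
  "H9 = mk_graph 8 [(0,1),(1,2),(2,3),(3,4),(1,5),(2,6),(3,7)]"

end

theory Submission
  imports Defs
begin

text \<open>All ten graphs are small, so the statement is decided by computation. A vertex \<open>v\<close>
  is at distance at most \<open>k\<close> from \<open>u\<close> iff it lies in the ball obtained from \<open>[u]\<close> by \<open>k\<close>
  neighbourhood expansions, so the packing condition becomes a finite table of conflicts.
  A depth-first search that colours the vertices one at a time, proved sound and complete,
  then decides packing colourability. Criticality of \<open>G\<close> amounts to: no packing
  3-colouring of \<open>G\<close>, a packing 4-colouring of \<open>G\<close>, and a packing 3-colouring of every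
  \<open>G - x\<close>; these instances are evaluated by rewriting (\<open>code_simp\<close>).\<close>

definition graph_of_lists :: "'a list \<Rightarrow> ('a \<times> 'a) list \<Rightarrow> 'a graph" where
  "graph_of_lists vs es = (set vs, (\<lambda>(u, v). {u, v}) ` set es)"

definition edges_within :: "'a list \<Rightarrow> ('a \<times> 'a) list \<Rightarrow> bool" where
  "edges_within vs es \<longleftrightarrow> (\<forall>(u, v)\<in>set es. u \<in> set vs \<and> v \<in> set vs)"

definition neighbours :: "('a \<times> 'a) list \<Rightarrow> 'a \<Rightarrow> 'a list" where
  "neighbours es x = map snd (filter (\<lambda>p. fst p = x) es) @ map fst (filter (\<lambda>p. snd p = x) es)"

fun ball :: "('a \<times> 'a) list \<Rightarrow> nat \<Rightarrow> 'a \<Rightarrow> 'a list" where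
  "ball es 0 u = [u]"
| "ball es (Suc k) u = (let b = ball es k u in remdups (b @ concat (map (neighbours es) b)))"

lemma set_ball_Suc:
  "set (ball es (Suc k) u) = set (ball es k u) \<union> (\<Union>w\<in>set (ball es k u). set (neighbours es w))"
  by (simp add: Let_def)

declare ball.simps(2) [simp del]

lemma centre_in_ball: "u \<in> set (ball es k u)"
  by (induction k) (auto simp: set_ball_Suc)

lemma verts_graph_of_lists [simp]: "verts (graph_of_lists vs es) = set vs"
  by (simp add: verts_def graph_of_lists_def)

lemma adj_graph_of_lists_iff: "adj (graph_of_lists vs es) x y \<longleftrightarrow> y \<in> set (neighbours es x)"
  unfolding adj_def graph_of_lists_def edges_def neighbours_def
  by (force simp: doubleton_eq_iff image_iff)

lemma delete_vertex_graph_of_lists: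
  "delete_vertex (graph_of_lists vs es) x =
     graph_of_lists (removeAll x vs) (filter (\<lambda>(u, v). u \<noteq> x \<and> v \<noteq> x) es)"
  unfolding delete_vertex_def graph_of_lists_def verts_def edges_def by auto

lemma walk_snoc_iff:
  assumes "xs \<noteq> []"
  shows "walk G (xs @ [v]) \<longleftrightarrow> walk G xs \<and> v \<in> verts G \<and> adj G (last xs) v"
proof
  assume w: "walk G (xs @ [v])"
  obtain m where m: "length xs = Suc m"
    using assms by (cases xs) auto
  have "adj G (xs ! i) (xs ! Suc i)" if "Suc i < length xs" for i
    using w that unfolding walk_def by (metis length_append_singleton less_SucI nth_append Suc_lessD)
  moreover have "adj G (last xs) v"
  proof -
    have "adj G ((xs @ [v]) ! m) ((xs @ [v]) ! Suc m)"
      using w m unfolding walk_def by auto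
    then show ?thesis
      using m assms by (simp add: nth_append last_conv_nth)
  qed
  ultimately show "walk G xs \<and> v \<in> verts G \<and> adj G (last xs) v"
    using w assms unfolding walk_def by auto
next
  assume xs: "walk G xs \<and> v \<in> verts G \<and> adj G (last xs) v"
  have "adj G ((xs @ [v]) ! i) ((xs @ [v]) ! Suc i)" if i: "Suc i < length (xs @ [v])" for i
  proof (cases "Suc i < length xs")
    case True
    then show ?thesis using xs unfolding walk_def by (simp add: nth_append)
  next
    case False
    then have "i = length xs - 1" using i by simp
    then show ?thesis using xs assms False by (simp add: nth_append last_conv_nth)
  qed
  then show "walk G (xs @ [v])"
    using xs unfolding walk_def by auto
qed

lemma walk_ends_in_ball:
  assumes "walk (graph_of_lists vs es) xs" "length xs \<le> Suc k"
  shows "last xs \<in> set (ball es k (hd xs))"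
  using assms
proof (induction xs arbitrary: k rule: rev_induct)
  case Nil
  then show ?case by (simp add: walk_def)
next
  case (snoc v xs)
  show ?case
  proof (cases "xs = []")
    case True
    then show ?thesis using centre_in_ball by simp
  next
    case False
    with snoc.prems obtain k' where k: "k = Suc k'" and len: "length xs \<le> Suc k'"
      by (cases k) auto
    from snoc.prems(1) False have "walk (graph_of_lists vs es) xs" "v \<in> set (neighbours es (last xs))"
      by (simp_all add: walk_snoc_iff adj_graph_of_lists_iff)
    with snoc.IH len False show ?thesis
      by (auto simp: k set_ball_Suc)
  qed
qed

lemma ball_member_has_walk:
  assumes "edges_within vs es" "u \<in> set vs" "v \<in> set (ball es k u)"
  shows "\<exists>xs. walk (graph_of_lists vs es) xs \<and> hd xs = u \<and> last xs = v \<and> length xs \<le> Suc k"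
  using assms(3)
proof (induction k arbitrary: v)
  case 0
  then have "walk (graph_of_lists vs es) [u] \<and> hd [u] = u \<and> last [u] = v"
    using assms(2) by (simp add: walk_def)
  then show ?case by fastforce
next
  case (Suc k)
  show ?case
  proof (cases "v \<in> set (ball es k u)")
    case True
    then show ?thesis using Suc.IH le_SucI by blast
  next
    case False
    with Suc.prems obtain w where w: "w \<in> set (ball es k u)" "v \<in> set (neighbours es w)"
      by (auto simp: set_ball_Suc)
    with Suc.IH obtain xs where xs: "walk (graph_of_lists vs es) xs" "hd xs = u" "last xs = w"
      "length xs \<le> Suc k" by blast
    have "xs \<noteq> []" using xs(1) by (simp add: walk_def)
    moreover have "v \<in> set vs"
      using assms(1) w(2) unfolding edges_within_def neighbours_def by auto
    ultimately have "walk (graph_of_lists vs es) (xs @ [v])"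
      using xs w(2) by (simp add: walk_snoc_iff adj_graph_of_lists_iff)
    with xs \<open>xs \<noteq> []\<close> show ?thesis
      by (intro exI[of _ "xs @ [v]"]) auto
  qed
qed

lemma dist_le_enat_iff:
  "dist G u v \<le> enat k \<longleftrightarrow> (\<exists>xs. walk G xs \<and> hd xs = u \<and> last xs = v \<and> length xs - 1 \<le> k)"
proof
  let ?W = "{xs. walk G xs \<and> hd xs = u \<and> last xs = v}"
  let ?L = "(\<lambda>xs. enat (length xs - 1)) ` ?W"
  assume le: "dist G u v \<le> enat k"
  then have "?L \<noteq> {}"
    unfolding dist_def by (auto simp: Inf_enat_def split: if_split_asm)
  then have "dist G u v \<in> ?L"
    unfolding dist_def Inf_enat_def by (auto intro: LeastI)
  with le show "\<exists>xs. walk G xs \<and> hd xs = u \<and> last xs = v \<and> length xs - 1 \<le> k"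
    by auto
next
  assume "\<exists>xs. walk G xs \<and> hd xs = u \<and> last xs = v \<and> length xs - 1 \<le> k"
  then obtain xs where xs: "walk G xs" "hd xs = u" "last xs = v" "length xs - 1 \<le> k"
    by blast
  then have "dist G u v \<le> enat (length xs - 1)"
    unfolding dist_def by (intro INF_lower) auto
  also have "\<dots> \<le> enat k" using xs(4) by simp
  finally show "dist G u v \<le> enat k" .
qed

lemma enat_less_dist_iff:
  assumes "edges_within vs es" "u \<in> set vs"
  shows "enat k < dist (graph_of_lists vs es) u v \<longleftrightarrow> v \<notin> set (ball es k u)"
proof -
  let ?G = "graph_of_lists vs es"
  have "(\<exists>xs. walk ?G xs \<and> hd xs = u \<and> last xs = v \<and> length xs - 1 \<le> k) \<longleftrightarrow>
        v \<in> set (ball es k u)"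
  proof
    assume "\<exists>xs. walk ?G xs \<and> hd xs = u \<and> last xs = v \<and> length xs - 1 \<le> k"
    then obtain xs where xs: "walk ?G xs" "hd xs = u" "last xs = v" "length xs - 1 \<le> k"
      by blast
    then have "length xs \<le> Suc k"
      by (simp add: walk_def)
    with xs show "v \<in> set (ball es k u)"
      using walk_ends_in_ball by blast
  next
    assume "v \<in> set (ball es k u)"
    then show "\<exists>xs. walk ?G xs \<and> hd xs = u \<and> last xs = v \<and> length xs - 1 \<le> k"
      using ball_member_has_walk[OF assms] by fastforce
  qed
  then show ?thesis
    by (simp add: dist_le_enat_iff flip: not_le)
qed

definition conflict_free :: "(nat \<Rightarrow> 'a \<Rightarrow> 'a \<Rightarrow> bool) \<Rightarrow> 'a set \<Rightarrow> ('a \<Rightarrow> nat) \<Rightarrow> bool" where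
  "conflict_free cf S c \<longleftrightarrow> (\<forall>u\<in>S. \<forall>v\<in>S. u \<noteq> v \<and> c u = c v \<longrightarrow> \<not> cf (c u) u v)"

lemma packing_coloring_graph_of_lists_iff:
  assumes "edges_within vs es"
  shows "packing_coloring (graph_of_lists vs es) k c \<longleftrightarrow>
    c ` set vs \<subseteq> {1..k} \<and> conflict_free (\<lambda>i u v. v \<in> set (ball es i u)) (set vs) c"
  unfolding packing_coloring_def conflict_free_def
  using enat_less_dist_iff[OF assms] by auto

lemma conflict_free_cong:
  assumes "\<And>i u v. i \<in> K \<Longrightarrow> u \<in> S \<Longrightarrow> v \<in> S \<Longrightarrow> cf i u v \<longleftrightarrow> cf' i u v" "c ` S \<subseteq> K"
  shows "conflict_free cf S c \<longleftrightarrow> conflict_free cf' S c"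
  using assms unfolding conflict_free_def by blast

definition compatible ::
    "(nat \<Rightarrow> 'a \<Rightarrow> 'a \<Rightarrow> bool) \<Rightarrow> 'a list \<Rightarrow> ('a \<Rightarrow> nat) \<Rightarrow> 'a \<Rightarrow> nat \<Rightarrow> bool" where
  "compatible cf placed c v i \<longleftrightarrow> list_all (\<lambda>u. c u = i \<longrightarrow> \<not> cf i u v \<and> \<not> cf i v u) placed"

text \<open>Depth-first search extending the colouring \<open>c\<close> of \<open>placed\<close> to \<open>todo\<close> with colours
  from \<open>ks\<close>; the last argument lists the colours still to be tried for the head of \<open>todo\<close>.
  The nested \<open>if\<close> (rather than \<open>\<and>\<close>/\<open>\<or>\<close>) makes evaluation by rewriting short-circuit.\<close>
fun extend_coloring ::
    "(nat \<Rightarrow> 'a \<Rightarrow> 'a \<Rightarrow> bool) \<Rightarrow> nat list \<Rightarrow> 'a list \<Rightarrow> 'a list \<Rightarrow> ('a \<Rightarrow> nat) \<Rightarrow> nat list \<Rightarrow> bool"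
  where
  "extend_coloring cf ks [] placed c js = True"
| "extend_coloring cf ks (v # todo) placed c [] = False"
| "extend_coloring cf ks (v # todo) placed c (i # js) =
     (if compatible cf placed c v i
      then (if extend_coloring cf ks todo (v # placed) (c(v := i)) ks then True
            else extend_coloring cf ks (v # todo) placed c js)
      else extend_coloring cf ks (v # todo) placed c js)"

lemma extend_coloring_Cons_iff:
  "extend_coloring cf ks (v # todo) placed c js \<longleftrightarrow>
     (\<exists>i\<in>set js. compatible cf placed c v i \<and> extend_coloring cf ks todo (v # placed) (c(v := i)) ks)"
proof (induction js)
  case (Cons i js)
  have "extend_coloring cf ks (v # todo) placed c (i # js) \<longleftrightarrow>
      (compatible cf placed c v i \<and> extend_coloring cf ks todo (v # placed) (c(v := i)) ks) \<or>
      extend_coloring cf ks (v # todo) placed c js"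
    by (simp only: extend_coloring.simps split: if_split) blast
  with Cons.IH show ?case
    by (simp only: list.set(2) Set.bex_simps(5))
qed simp

lemma conflict_free_Cons:
  assumes "v \<notin> set placed" "conflict_free cf (set placed) c" "compatible cf placed c v i"
  shows "conflict_free cf (set (v # placed)) (c(v := i))"
  using assms unfolding conflict_free_def compatible_def list_all_iff by auto

lemma extend_coloring_sound:
  assumes "extend_coloring cf ks todo placed c ks" "distinct (todo @ placed)"
    "conflict_free cf (set placed) c" "c ` set placed \<subseteq> set ks"
  shows "\<exists>c'. (\<forall>u\<in>set placed. c' u = c u) \<and> c' ` (set todo \<union> set placed) \<subseteq> set ks \<and>
     conflict_free cf (set todo \<union> set placed) c'"
  using assms
proof (induction todo arbitrary: placed c)
  case Nil
  then show ?case by auto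
next
  case (Cons v todo)
  from Cons.prems(1) obtain i where i: "i \<in> set ks" "compatible cf placed c v i"
    and rec: "extend_coloring cf ks todo (v # placed) (c(v := i)) ks"
    by (auto simp: extend_coloring_Cons_iff)
  have v: "v \<notin> set placed" using Cons.prems(2) by auto
  have free: "conflict_free cf (set (v # placed)) (c(v := i))"
    using v Cons.prems(3) i(2) by (rule conflict_free_Cons)
  have range: "(c(v := i)) ` set (v # placed) \<subseteq> set ks"
    using Cons.prems(4) i(1) v by auto
  have "distinct (todo @ v # placed)" using Cons.prems(2) by auto
  from Cons.IH[OF rec this free range] obtain c' where c': "\<forall>u\<in>set (v # placed). c' u = (c(v := i)) u"
    "c' ` (set todo \<union> set (v # placed)) \<subseteq> set ks" "conflict_free cf (set todo \<union> set (v # placed)) c'"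
    by blast
  have "set todo \<union> set (v # placed) = set (v # todo) \<union> set placed" by auto
  with c' v show ?case
    by (metis fun_upd_other list.set_intros(2))
qed

lemma extend_coloring_complete:
  assumes "distinct (todo @ placed)" "\<forall>u\<in>set placed. c' u = c u"
    "c' ` (set todo \<union> set placed) \<subseteq> set ks" "conflict_free cf (set todo \<union> set placed) c'"
  shows "extend_coloring cf ks todo placed c ks"
  using assms
proof (induction todo arbitrary: placed c)
  case Nil
  then show ?case by simp
next
  case (Cons v todo)
  have v: "v \<notin> set placed" using Cons.prems(1) by auto
  have "c' v \<in> set ks" using Cons.prems(3) by auto
  moreover have "compatible cf placed c v (c' v)"
    unfolding compatible_def list_all_iff
  proof (intro ballI impI)
    fix u assume u: "u \<in> set placed" "c u = c' v"
    then have "u \<noteq> v" "c' u = c' v" using v Cons.prems(2) by auto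
    with u(1) Cons.prems(4) show "\<not> cf (c' v) u v \<and> \<not> cf (c' v) v u"
      unfolding conflict_free_def by (metis UnCI list.set_intros(1))
  qed
  moreover have "extend_coloring cf ks todo (v # placed) (c(v := c' v)) ks"
    using Cons.prems v by (intro Cons.IH) auto
  ultimately show ?case
    unfolding extend_coloring_Cons_iff by blast
qed

lemma packing_colorable_iff_extend_coloring:
  assumes "edges_within vs es" "distinct vs" "set ks = {1..k}"
    and "\<And>i u v. i \<in> {1..k} \<Longrightarrow> u \<in> set vs \<Longrightarrow> v \<in> set vs \<Longrightarrow>
      cf i u v \<longleftrightarrow> v \<in> set (ball es i u)"
  shows "(\<exists>c. packing_coloring (graph_of_lists vs es) k c) \<longleftrightarrow> extend_coloring cf ks vs [] c\<^sub>0 ks"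
proof -
  have "conflict_free cf (set vs) c \<longleftrightarrow> conflict_free (\<lambda>i u v. v \<in> set (ball es i u)) (set vs) c"
    if "c ` set vs \<subseteq> {1..k}" for c
    by (rule conflict_free_cong[OF assms(4) that])
  then have "packing_coloring (graph_of_lists vs es) k c \<longleftrightarrow>
      c ` set vs \<subseteq> set ks \<and> conflict_free cf (set vs) c" for c
    unfolding packing_coloring_graph_of_lists_iff[OF assms(1)] assms(3) by blast
  then have "(\<exists>c. packing_coloring (graph_of_lists vs es) k c) \<longleftrightarrow>
      (\<exists>c. c ` set vs \<subseteq> set ks \<and> conflict_free cf (set vs) c)"
    by simp
  also have "\<dots> \<longleftrightarrow> extend_coloring cf ks vs [] c\<^sub>0 ks"
    using extend_coloring_sound[of cf ks vs "[]" c\<^sub>0] extend_coloring_complete[of vs "[]"] assms(2)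
    by (auto simp: conflict_free_def)
  finally show ?thesis .
qed

definition ball_table :: "(nat \<times> nat) list \<Rightarrow> nat \<Rightarrow> nat \<Rightarrow> nat list list list" where
  "ball_table es n k = map (\<lambda>u. map (\<lambda>i. ball es i u) [0..<Suc k]) [0..<n]"

text \<open>The balls are tabulated so that evaluation by rewriting computes each of them only once.\<close>
definition search_colorable :: "(nat \<times> nat) list \<Rightarrow> nat \<Rightarrow> nat list \<Rightarrow> nat \<Rightarrow> bool" where
  "search_colorable es n vs k =
    (let t = ball_table es n k
     in extend_coloring (\<lambda>i u v. v \<in> set (t ! u ! i)) [1..<Suc k] vs [] (\<lambda>_. 0) [1..<Suc k])"

lemma ball_table_nth: "u < n \<Longrightarrow> i \<le> k \<Longrightarrow> ball_table es n k ! u ! i = ball es i u"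
  unfolding ball_table_def by (simp del: upt_Suc)

lemma packing_colorable_iff_search_colorable:
  assumes "edges_within vs es" "distinct vs" "set vs \<subseteq> {..<n}"
  shows "(\<exists>c. packing_coloring (graph_of_lists vs es) k c) \<longleftrightarrow> search_colorable es n vs k"
  unfolding search_colorable_def Let_def
  using assms by (intro packing_colorable_iff_extend_coloring) (auto simp: ball_table_nth)

lemma packing_coloring_mono:
  "packing_coloring G k c \<Longrightarrow> k \<le> k' \<Longrightarrow> packing_coloring G k' c"
  unfolding packing_coloring_def by auto

lemma packing_chromatic_le: "packing_coloring G k c \<Longrightarrow> packing_chromatic G \<le> k"
  unfolding packing_chromatic_def by (blast intro: Least_le)

lemma packing_chromatic_eqI:
  assumes "packing_coloring G (Suc k) c" "\<nexists>c. packing_coloring G k c"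
  shows "packing_chromatic G = Suc k"
  unfolding packing_chromatic_def
proof (rule Least_equality)
  show "\<exists>c. packing_coloring G (Suc k) c" using assms(1) by blast
  show "Suc k \<le> k'" if "\<exists>c. packing_coloring G k' c" for k'
    using that assms(2) packing_coloring_mono not_less_eq_eq by blast
qed

lemma mk_graph_eq_graph_of_lists: "mk_graph n es = graph_of_lists [0..<n] es"
  by (simp add: mk_graph_def graph_of_lists_def)

lemma vertex_critical4_mk_graph:
  assumes "edges_within [0..<n] es"
    and "\<not> search_colorable es n [0..<n] 3" "search_colorable es n [0..<n] 4"
    and "list_all (\<lambda>x. search_colorable (filter (\<lambda>(u, v). u \<noteq> x \<and> v \<noteq> x) es) n
      (removeAll x [0..<n]) 3) [0..<n]"
  shows "vertex_critical4 (mk_graph n es)"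
proof -
  let ?G = "graph_of_lists [0..<n] es"
  have colorable_iff: "(\<exists>c. packing_coloring ?G k c) \<longleftrightarrow> search_colorable es n [0..<n] k" for k
    by (rule packing_colorable_iff_search_colorable[OF assms(1)]) auto
  have "packing_chromatic ?G = 4"
  proof -
    from assms(3) obtain c where "packing_coloring ?G 4 c"
      using colorable_iff by blast
    moreover have "\<nexists>c. packing_coloring ?G 3 c"
      using colorable_iff assms(2) by blast
    ultimately show ?thesis
      using packing_chromatic_eqI[of ?G 3] by (simp add: numeral_eq_Suc)
  qed
  moreover have "packing_chromatic (delete_vertex ?G x) < 4" if "x < n" for x
  proof -
    let ?es = "filter (\<lambda>(u, v). u \<noteq> x \<and> v \<noteq> x) es"
    let ?vs = "removeAll x [0..<n]"
    have "edges_within ?vs ?es"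
      using assms(1) unfolding edges_within_def by auto
    moreover have "distinct ?vs" "set ?vs \<subseteq> {..<n}"
      by (auto simp: distinct_removeAll)
    moreover have "search_colorable ?es n ?vs 3"
      using assms(4) that by (simp add: list_all_iff)
    ultimately obtain c where "packing_coloring (graph_of_lists ?vs ?es) 3 c"
      using packing_colorable_iff_search_colorable by blast
    then have "packing_chromatic (delete_vertex ?G x) \<le> 3"
      unfolding delete_vertex_graph_of_lists by (rule packing_chromatic_le)
    then show ?thesis by simp
  qed
  ultimately show ?thesis
    unfolding vertex_critical4_def mk_graph_eq_graph_of_lists verts_graph_of_lists set_upt by auto
qed

theorem mainTheorem3:
  shows "vertex_critical4 K4 \<and> vertex_critical4 H1 \<and> vertex_critical4 H2 \<and>
         vertex_critical4 H3 \<and> vertex_critical4 H4 \<and> vertex_critical4 H5 \<and>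
         vertex_critical4 H6 \<and> vertex_critical4 H7 \<and> vertex_critical4 H8 \<and>
         vertex_critical4 H9"
  unfolding K4_def H1_def H2_def H3_def H4_def H5_def H6_def H7_def H8_def H9_def
  by (intro conjI; rule vertex_critical4_mk_graph; code_simp)

end
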